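(* Every quaternary matrix $M$ that contains a cycle of length at least $6$ contains a $2\times 2$, $2\times 3$, or $3\times 2$ submatrix that is not a weak lonesum matrix.
   Context: A quaternary matrix has entries in $\{0,1,2,3\}$; a $q$-ary matrix has entries in $\{0,\ldots,q-1\}$. The structure vector of a $q$-ary vector $v=(v_1,\ldots,v_n)$ is $(a_0,\ldots,a_{q-1})$ with $a_k=|\{i: v_i=k\}|$. A $q$-ary $m\times n$ matrix is a weak lonesum matrix if no other $q$-ary $m\times n$ matrix has the same row structure vectors and column structure vectors. In a matrix $M$, a path is a sequence $(M_{i_1,j_1},\ldots,M_{i_k,j_k})$ of entries at pairwise distinct positions such that: (1) for each $l\le k-1$, $i_l=i_{l+1}$ or $j_l=j_{l+1}$; (2) for each $l\le k-2$, $|\{i_l,i_{l+1},i_{l+2}\}|\ge2$ and $|\{j_l,j_{l+1},j_{l+2}\}|\ge 2$; (3) there are two distinct values $a,b$ with the entries' values being $(a,b,a,b,\ldots)$ alternating. The path is a cycle of length $k$ if, setting $(i_{k+1},j_{k+1})=(i_1,j_1)$ and $(i_{k+2},j_{k+2})=(i_2,j_2)$, the extended sequence of $k+2$ entries also satisfies conditions (1)–(3). A submatrix is formed by the entries in the intersection of chosen rows and chosen columns. *)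

theory Defs
  imports Main
begin

(* An m x n matrix is a function nat => nat => nat, only entries (i,j) with i<m, j<n matter. *)

definition q_ary_matrix :: "nat \<Rightarrow> nat \<Rightarrow> nat \<Rightarrow> (nat \<Rightarrow> nat \<Rightarrow> nat) \<Rightarrow> bool" where
  "q_ary_matrix q m n M \<longleftrightarrow> (\<forall>i<m. \<forall>j<n. M i j < q)"

definition row_struct :: "nat \<Rightarrow> nat \<Rightarrow> (nat \<Rightarrow> nat \<Rightarrow> nat) \<Rightarrow> nat \<Rightarrow> nat list" where
  "row_struct q n M i = map (\<lambda>k. card {j. j < n \<and> M i j = k}) [0..<q]"

definition col_struct :: "nat \<Rightarrow> nat \<Rightarrow> (nat \<Rightarrow> nat \<Rightarrow> nat) \<Rightarrow> nat \<Rightarrow> nat list" where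
  "col_struct q m M j = map (\<lambda>k. card {i. i < m \<and> M i j = k}) [0..<q]"

definition weak_lonesum :: "nat \<Rightarrow> nat \<Rightarrow> nat \<Rightarrow> (nat \<Rightarrow> nat \<Rightarrow> nat) \<Rightarrow> bool" where
  "weak_lonesum q m n M \<longleftrightarrow> q_ary_matrix q m n M \<and>
     (\<forall>N. q_ary_matrix q m n N
        \<and> (\<forall>i<m. row_struct q n N i = row_struct q n M i)
        \<and> (\<forall>j<n. col_struct q m N j = col_struct q m M j)
        \<longrightarrow> (\<forall>i<m. \<forall>j<n. N i j = M i j))"

definition path_conds :: "(nat \<Rightarrow> nat \<Rightarrow> nat) \<Rightarrow> (nat \<times> nat) list \<Rightarrow> bool" where
  "path_conds M ps \<longleftrightarrow>
     (\<forall>l. l + 1 < length ps \<longrightarrow>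
        fst (ps!l) = fst (ps!(l+1)) \<or> snd (ps!l) = snd (ps!(l+1))) \<and>
     (\<forall>l. l + 2 < length ps \<longrightarrow>
        card {fst (ps!l), fst (ps!(l+1)), fst (ps!(l+2))} \<ge> 2 \<and>
        card {snd (ps!l), snd (ps!(l+1)), snd (ps!(l+2))} \<ge> 2) \<and>
     (\<exists>a b. a \<noteq> b \<and> (\<forall>l<length ps.
        M (fst (ps!l)) (snd (ps!l)) = (if even l then a else b)))"

definition is_path :: "nat \<Rightarrow> nat \<Rightarrow> (nat \<Rightarrow> nat \<Rightarrow> nat) \<Rightarrow> (nat \<times> nat) list \<Rightarrow> bool" where
  "is_path m n M ps \<longleftrightarrow> distinct ps \<and> (\<forall>p\<in>set ps. fst p < m \<and> snd p < n) \<and> path_conds M ps"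

definition is_cycle :: "nat \<Rightarrow> nat \<Rightarrow> (nat \<Rightarrow> nat \<Rightarrow> nat) \<Rightarrow> (nat \<times> nat) list \<Rightarrow> bool" where
  "is_cycle m n M ps \<longleftrightarrow> is_path m n M ps \<and> length ps \<ge> 2 \<and>
     path_conds M (ps @ [ps!0, ps!1])"

definition submatrix :: "(nat \<Rightarrow> nat \<Rightarrow> nat) \<Rightarrow> nat list \<Rightarrow> nat list \<Rightarrow> (nat \<Rightarrow> nat \<Rightarrow> nat)" where
  "submatrix M rs cs = (\<lambda>i j. M (rs!i) (cs!j))"

definition valid_sub_indices :: "nat \<Rightarrow> nat \<Rightarrow> nat list \<Rightarrow> nat list \<Rightarrow> bool" where
  "valid_sub_indices m n rs cs \<longleftrightarrow> sorted_wrt (<) rs \<and> sorted_wrt (<) cs \<and>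
     (\<forall>i\<in>set rs. i < m) \<and> (\<forall>j\<in>set cs. j < n)"

end

theory Submission
  imports Defs
begin

(* A cycle walks alternately along a row and along a column, so after fixing a starting
   row step it is a closed "staircase": rows R 0, ..., R (L - 1) and columns
   C 0, ..., C (L - 1) with value a at (R i, C i) and value b at (R i, C (i + 1 mod L)).
   Non-lonesumness of a small submatrix is certified by exchanging two of its rows (or
   columns) that have the same value counts; this handles the switch [p q; q p] and the
   cyclic shifts [a b x; x a b] and its transpose.  A staircase with a chord (an extra a
   or b among its rows and columns) can be shortened, so by induction on the length it
   suffices to treat chordless staircases.  Length 2 is a switch.  For length at least 3
   all entries two or more steps off the diagonal avoid a and b, hence take only two
   values, and a parity argument (two_valued_obstruction) shows that one of the three
   patterns must occur. *)

definition small_non_lonesum :: "nat \<Rightarrow> nat \<Rightarrow> (nat \<Rightarrow> nat \<Rightarrow> nat) \<Rightarrow> bool" where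
  "small_non_lonesum m n M \<longleftrightarrow> (\<exists>rs cs. valid_sub_indices m n rs cs \<and>
     (length rs, length cs) \<in> {(2,2), (2,3), (3,2)} \<and>
     \<not> weak_lonesum 4 (length rs) (length cs) (submatrix M rs cs))"

lemma card_nth_filter:
  assumes "distinct xs"
  shows "card {j. j < length xs \<and> P (xs!j)} = card {x\<in>set xs. P x}"
proof -
  have "card {j. j < length xs \<and> P (xs!j)} = length (filter P xs)"
    by (simp add: length_filter_conv_card)
  also have "\<dots> = card {x\<in>set xs. P x}"
    using distinct_length_filter[OF assms] by (simp add: Int_def conj_commute)
  finally show ?thesis .
qed

lemma not_weak_lonesum_by_rearrangement:
  fixes Rs Cs :: "nat set"
  defines "rs \<equiv> sorted_list_of_set Rs" and "cs \<equiv> sorted_list_of_set Cs"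
  assumes fin: "finite Rs" "finite Cs"
    and N_q: "\<And>r c. r \<in> Rs \<Longrightarrow> c \<in> Cs \<Longrightarrow> N r c < q"
    and rows: "\<And>r k. r \<in> Rs \<Longrightarrow> card {c\<in>Cs. N r c = k} = card {c\<in>Cs. M r c = k}"
    and cols: "\<And>c k. c \<in> Cs \<Longrightarrow> card {r\<in>Rs. N r c = k} = card {r\<in>Rs. M r c = k}"
    and differ: "r' \<in> Rs" "c' \<in> Cs" "N r' c' \<noteq> M r' c'"
  shows "\<not> weak_lonesum q (length rs) (length cs) (submatrix M rs cs)"
proof
  assume lonesum: "weak_lonesum q (length rs) (length cs) (submatrix M rs cs)"
  have set_rs: "set rs = Rs" and dist_rs: "distinct rs"
    using fin(1) by (simp_all add: rs_def)
  have set_cs: "set cs = Cs" and dist_cs: "distinct cs"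
    using fin(2) by (simp_all add: cs_def)
  have "q_ary_matrix q (length rs) (length cs) (submatrix N rs cs)"
    using N_q set_rs set_cs by (auto simp: q_ary_matrix_def submatrix_def)
  moreover have "row_struct q (length cs) (submatrix N rs cs) i
      = row_struct q (length cs) (submatrix M rs cs) i" if "i < length rs" for i
  proof -
    have "rs!i \<in> Rs" using that set_rs by auto
    then have "card {j. j < length cs \<and> N (rs!i) (cs!j) = k}
             = card {j. j < length cs \<and> M (rs!i) (cs!j) = k}" for k
      using rows card_nth_filter[OF dist_cs, of "\<lambda>c. N (rs!i) c = k"]
        card_nth_filter[OF dist_cs, of "\<lambda>c. M (rs!i) c = k"] set_cs by simp
    then show ?thesis by (simp add: row_struct_def submatrix_def)
  qed
  moreover have "col_struct q (length rs) (submatrix N rs cs) j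
      = col_struct q (length rs) (submatrix M rs cs) j" if "j < length cs" for j
  proof -
    have "cs!j \<in> Cs" using that set_cs by auto
    then have "card {i. i < length rs \<and> N (rs!i) (cs!j) = k}
             = card {i. i < length rs \<and> M (rs!i) (cs!j) = k}" for k
      using cols card_nth_filter[OF dist_rs, of "\<lambda>r. N r (cs!j) = k"]
        card_nth_filter[OF dist_rs, of "\<lambda>r. M r (cs!j) = k"] set_rs by simp
    then show ?thesis by (simp add: col_struct_def submatrix_def)
  qed
  ultimately have same: "submatrix N rs cs i j = submatrix M rs cs i j"
    if "i < length rs" "j < length cs" for i j
    using lonesum that unfolding weak_lonesum_def by blast
  obtain i j where "i < length rs" "rs!i = r'" "j < length cs" "cs!j = c'"
    using differ(1,2) set_rs set_cs by (metis in_set_conv_nth)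
  then show False using same differ(3) by (auto simp: submatrix_def)
qed

lemma small_non_lonesum_by_rearrangement:
  assumes dims: "(card Rs, card Cs) \<in> {(2,2), (2,3), (3,2)}"
    and bounds: "\<forall>r\<in>Rs. r < m" "\<forall>c\<in>Cs. c < n"
    and N_q: "\<And>r c. r \<in> Rs \<Longrightarrow> c \<in> Cs \<Longrightarrow> N r c < 4"
    and rows: "\<And>r k. r \<in> Rs \<Longrightarrow> card {c\<in>Cs. N r c = k} = card {c\<in>Cs. M r c = k}"
    and cols: "\<And>c k. c \<in> Cs \<Longrightarrow> card {r\<in>Rs. N r c = k} = card {r\<in>Rs. M r c = k}"
    and differ: "r' \<in> Rs" "c' \<in> Cs" "N r' c' \<noteq> M r' c'"
  shows "small_non_lonesum m n M"
proof -
  have fin: "finite Rs" "finite Cs" using dims by (auto intro: card_ge_0_finite)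
  define rs where "rs = sorted_list_of_set Rs"
  define cs where "cs = sorted_list_of_set Cs"
  have "\<not> weak_lonesum 4 (length rs) (length cs) (submatrix M rs cs)"
    unfolding rs_def cs_def
    by (rule not_weak_lonesum_by_rearrangement[OF fin N_q rows cols differ])
  moreover have "valid_sub_indices m n rs cs"
    using fin bounds by (simp add: valid_sub_indices_def rs_def cs_def)
  moreover have "(length rs, length cs) \<in> {(2,2), (2,3), (3,2)}"
    using fin dims by (simp add: rs_def cs_def)
  ultimately show ?thesis unfolding small_non_lonesum_def by blast
qed

lemma card_filter_two:
  assumes "x \<noteq> y"
  shows "card {c\<in>{x,y}. P c} = of_bool (P x) + of_bool (P y)"
proof -
  have "{c\<in>{x,y}. P c} = (if P x then {x} else {}) \<union> (if P y then {y} else {})"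
    by auto
  then show ?thesis using assms by (cases "P x"; cases "P y") simp_all
qed

lemma card_filter_three:
  assumes "x \<noteq> y" "x \<noteq> z" "y \<noteq> z"
  shows "card {c\<in>{x,y,z}. P c} = of_bool (P x) + of_bool (P y) + of_bool (P z)"
proof -
  have "{c\<in>{x,y,z}. P c}
      = (if P x then {x} else {}) \<union> (if P y then {y} else {}) \<union> (if P z then {z} else {})"
    by auto
  then show ?thesis using assms by (cases "P x"; cases "P y"; cases "P z") simp_all
qed

(* Two different rows with the same value counts can be exchanged: the column counts do
   not change, so the submatrix they span with 2 or 3 columns is not weak lonesum. *)
lemma swap_rows_small_non_lonesum:
  assumes dims: "card Cs \<in> {2, 3}" and rows: "r1 \<noteq> r2" "r1 < m" "r2 < m"
    and cols: "\<forall>c\<in>Cs. c < n"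
    and entries: "\<And>r c. r \<in> {r1,r2} \<Longrightarrow> c \<in> Cs \<Longrightarrow> M r c < 4"
    and same_counts: "\<And>k. card {c\<in>Cs. M r1 c = k} = card {c\<in>Cs. M r2 c = k}"
    and differ: "c' \<in> Cs" "M r1 c' \<noteq> M r2 c'"
  shows "small_non_lonesum m n M"
proof (rule small_non_lonesum_by_rearrangement[where Rs = "{r1,r2}" and Cs = Cs
      and N = "\<lambda>r c. if r = r1 then M r2 c else M r1 c" and r' = r1 and c' = c'])
  show "card {r\<in>{r1,r2}. (if r = r1 then M r2 c else M r1 c) = k} = card {r\<in>{r1,r2}. M r c = k}"
    for c k
    unfolding card_filter_two[OF rows(1)] using rows(1) by simp
qed (use assms in auto)

lemma swap_cols_small_non_lonesum:
  assumes dims: "card Rs \<in> {2, 3}" and cols: "c1 \<noteq> c2" "c1 < n" "c2 < n"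
    and rows: "\<forall>r\<in>Rs. r < m"
    and entries: "\<And>r c. r \<in> Rs \<Longrightarrow> c \<in> {c1,c2} \<Longrightarrow> M r c < 4"
    and same_counts: "\<And>k. card {r\<in>Rs. M r c1 = k} = card {r\<in>Rs. M r c2 = k}"
    and differ: "r' \<in> Rs" "M r' c1 \<noteq> M r' c2"
  shows "small_non_lonesum m n M"
proof (rule small_non_lonesum_by_rearrangement[where Rs = Rs and Cs = "{c1,c2}"
      and N = "\<lambda>r c. if c = c1 then M r c2 else M r c1" and r' = r' and c' = c1])
  show "card {c\<in>{c1,c2}. (if c = c1 then M r c2 else M r c1) = k} = card {c\<in>{c1,c2}. M r c = k}"
    for r k
    unfolding card_filter_two[OF cols(1)] using cols(1) by simp
qed (use assms in auto)

lemma switch_small_non_lonesum: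
  assumes "r1 \<noteq> r2" "c1 \<noteq> c2" "r1 < m" "r2 < m" "c1 < n" "c2 < n"
    and "M r1 c1 = p" "M r2 c2 = p" "M r1 c2 = q" "M r2 c1 = q" "p \<noteq> q" "p < 4" "q < 4"
  shows "small_non_lonesum m n M"
proof (rule swap_rows_small_non_lonesum[where Cs = "{c1,c2}" and c' = c1])
  show "card {c\<in>{c1,c2}. M r1 c = k} = card {c\<in>{c1,c2}. M r2 c = k}" for k
    unfolding card_filter_two[OF assms(2)] using assms(7-10) by simp
qed (use assms in auto)

lemma shift_23_small_non_lonesum:
  assumes "r1 \<noteq> r2" "c1 \<noteq> c2" "c1 \<noteq> c3" "c2 \<noteq> c3"
    and "r1 < m" "r2 < m" "c1 < n" "c2 < n" "c3 < n"
    and "M r1 c1 = a" "M r1 c2 = b" "M r1 c3 = x" "M r2 c1 = x" "M r2 c2 = a" "M r2 c3 = b"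
    and "x \<noteq> a" "a < 4" "b < 4" "x < 4"
  shows "small_non_lonesum m n M"
proof (rule swap_rows_small_non_lonesum[where Cs = "{c1,c2,c3}" and c' = c1])
  show "card {c\<in>{c1,c2,c3}. M r1 c = k} = card {c\<in>{c1,c2,c3}. M r2 c = k}" for k
    unfolding card_filter_three[OF assms(2-4)] using assms(10-15) by simp
qed (use assms in \<open>auto simp: card_insert_if\<close>)

lemma shift_32_small_non_lonesum:
  assumes "r1 \<noteq> r2" "r1 \<noteq> r3" "r2 \<noteq> r3" "c1 \<noteq> c2"
    and "r1 < m" "r2 < m" "r3 < m" "c1 < n" "c2 < n"
    and "M r1 c1 = b" "M r1 c2 = x" "M r2 c1 = a" "M r2 c2 = b" "M r3 c1 = x" "M r3 c2 = a"
    and "x \<noteq> b" "a < 4" "b < 4" "x < 4"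
  shows "small_non_lonesum m n M"
proof (rule swap_cols_small_non_lonesum[where Rs = "{r1,r2,r3}" and r' = r1])
  show "card {r\<in>{r1,r2,r3}. M r c1 = k} = card {r\<in>{r1,r2,r3}. M r c2 = k}" for k
    unfolding card_filter_three[OF assms(1-3)] using assms(10-15) by simp
qed (use assms in \<open>auto simp: card_insert_if\<close>)

(* V i t stands for the entry of a cyclic L x L pattern in row i,
   t steps right of the diagonal; so V (i + t) (L - t) is the entry mirrored at the
   diagonal and V (i + t) (L - t + 1) the one mirrored at the superdiagonal.  If all
   entries two or more steps off the diagonal take at most two values, the conditions
   below cannot all hold: the entries V (i + 1) (L - 1) just below the diagonal are
   forced to be one constant K, and by induction on t every V i t with 2 <= t < L
   differs from K, which fails for t = L - 1. *)
lemma two_valued_obstruction: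
  fixes V :: "nat \<Rightarrow> nat \<Rightarrow> 'a"
  assumes long: "3 \<le> L"
    and two_values: "finite S" "card S \<le> 2"
    and two_valued: "\<And>i t. 2 \<le> t \<Longrightarrow> t < L \<Longrightarrow> V i t \<in> S"
    and mirror: "\<And>i t. 2 \<le> t \<Longrightarrow> t + 2 \<le> L \<Longrightarrow> V i t \<noteq> V (i + t) (L - t)"
    and mirror_shifted: "\<And>i t. 2 \<le> t \<Longrightarrow> Suc t < L \<Longrightarrow> V i (Suc t) \<noteq> V (i + t) (L - t + 1)"
    and near_left: "\<And>i. V i 2 \<noteq> V (Suc i) (L - 1)"
    and near_right: "\<And>i. V i 2 \<noteq> V (i + 2) (L - 1)"
  shows False
proof -
  have alternate: "x = z" if "x \<in> S" "y \<in> S" "z \<in> S" "x \<noteq> y" "y \<noteq> z" for x y z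
  proof (rule ccontr)
    assume "x \<noteq> z"
    then have "card {x, y, z} = 3" using that by simp
    moreover have "card {x, y, z} \<le> card S" using that two_values by (intro card_mono) auto
    ultimately show False using two_values by simp
  qed
  define K where "K = V 1 (L - 1)"
  have last_column_constant: "V (Suc i) (L - 1) = K" for i
  proof (induction i)
    case (Suc i)
    have "V (i + 2) (L - 1) = V (Suc i) (L - 1)"
      using alternate[OF two_valued two_valued two_valued near_right[symmetric] near_left] long
      by simp
    then show ?case using Suc by simp
  qed (simp add: K_def)
  have avoid_K: "V i t \<noteq> K" if "2 \<le> t" "t < L" for i t
    using that
  proof (induction t arbitrary: i rule: less_induct)
    case (less t)
    consider "t = 2" | "t = 3" | "4 \<le> t" using less.prems by linarith
    then show ?case
    proof cases
      case 1
      then show ?thesis using near_left last_column_constant by metis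
    next
      case 2
      have "V i 3 \<noteq> V (i + 2) (L - 1)"
      proof -
        have "L - 2 + 1 = L - 1" using long by simp
        then show ?thesis using mirror_shifted[of 2 i] less.prems 2 by (simp add: numeral_3_eq_3)
      qed
      then show ?thesis using 2 last_column_constant[of "Suc i"] by simp
    next
      case 3
      have "V i t = V (Suc i) (t - 2)"
      proof (rule alternate[OF two_valued two_valued two_valued])
        show "V i t \<noteq> V (i + (t - 1)) (L - (t - 1) + 1)"
          using mirror_shifted[of "t - 1" i] 3 less.prems by simp
        show "V (i + (t - 1)) (L - (t - 1) + 1) \<noteq> V (Suc i) (t - 2)"
        proof -
          have "V (Suc i) (t - 2) \<noteq> V (Suc i + (t - 2)) (L - (t - 2))"
            by (rule mirror) (use 3 less.prems in auto)
          moreover have "Suc i + (t - 2) = i + (t - 1)" "L - (t - 2) = L - (t - 1) + 1"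
            using 3 less.prems by auto
          ultimately show ?thesis by metis
        qed
      qed (use 3 less.prems in auto)
      then show ?thesis using less.IH[of "t - 2" "Suc i"] 3 less.prems by auto
    qed
  qed
  show False using avoid_K[of "L - 1" 1] last_column_constant[of 0] long by simp
qed

(* A closed staircase of length 2L: positions (R i, C i) carry the value a and positions
   (R i, C (i + 1 mod L)) carry the value b.  Every cycle of the theorem is a staircase. *)
definition staircase ::
    "nat \<Rightarrow> nat \<Rightarrow> (nat \<Rightarrow> nat \<Rightarrow> nat) \<Rightarrow> nat \<Rightarrow> nat \<Rightarrow> nat \<Rightarrow> (nat \<Rightarrow> nat) \<Rightarrow> (nat \<Rightarrow> nat) \<Rightarrow> bool"
  where "staircase m n M a b L R C \<longleftrightarrow> 2 \<le> L \<and>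
     (\<forall>i<L. R i < m \<and> C i < n \<and> M (R i) (C i) = a \<and> M (R i) (C (Suc i mod L)) = b)"

lemma mod_add_neq:
  fixes L :: nat
  assumes "0 < t" "t < L"
  shows "(x + t) mod L \<noteq> x mod L"
proof
  assume "(x + t) mod L = x mod L"
  then have "L dvd t" using mod_eq_dvd_iff_nat[of x "x + t" L] by simp
  then show False using assms by (simp add: nat_dvd_not_less)
qed

locale chordless_staircase =
  fixes m n :: nat and M :: "nat \<Rightarrow> nat \<Rightarrow> nat" and a b L :: nat and R C :: "nat \<Rightarrow> nat"
  assumes quaternary: "q_ary_matrix 4 m n M"
    and distinct_values: "a \<noteq> b"
    and stairs: "staircase m n M a b L R C"
    and long: "3 \<le> L"
    and a_on_diagonal: "\<And>i j. i < L \<Longrightarrow> j < L \<Longrightarrow> M (R i) (C j) = a \<Longrightarrow> i = j"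
    and b_on_superdiagonal: "\<And>i j. i < L \<Longrightarrow> j < L \<Longrightarrow> M (R i) (C j) = b \<Longrightarrow> j = Suc i mod L"
begin

definition row :: "nat \<Rightarrow> nat" where "row i = R (i mod L)"
definition col :: "nat \<Rightarrow> nat" where "col j = C (j mod L)"

definition off :: "nat \<Rightarrow> nat \<Rightarrow> nat" where "off i t = M (row i) (col (i + t))"

lemma stair_at: "R (i mod L) < m \<and> C (i mod L) < n \<and> M (R (i mod L)) (C (i mod L)) = a \<and>
    M (R (i mod L)) (C (Suc (i mod L) mod L)) = b"
proof -
  have "i mod L < L" using long by simp
  then show ?thesis using stairs by (simp add: staircase_def)
qed

lemma row_less: "row i < m" and col_less: "col j < n"
  using stair_at[of i] stair_at[of j] by (simp_all add: row_def col_def)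

lemma entry_less: "M (row i) (col j) < 4"
  using quaternary row_less col_less by (simp add: q_ary_matrix_def)

lemma diagonal: "M (row i) (col i) = a"
  using stair_at[of i] by (simp add: row_def col_def)

lemma superdiagonal: "M (row i) (col (Suc i)) = b"
  using stair_at[of i] by (simp add: row_def col_def mod_Suc_eq)

lemma a_index: "M (row i) (col j) = a \<Longrightarrow> j mod L = i mod L"
  using a_on_diagonal[of "i mod L" "j mod L"] long by (simp add: row_def col_def)

lemma b_index: "M (row i) (col j) = b \<Longrightarrow> j mod L = Suc i mod L"
  using b_on_superdiagonal[of "i mod L" "j mod L"] long by (simp add: row_def col_def mod_Suc_eq)

(* Different cyclic indices give different rows and columns, since a sits on the diagonal. *)
lemma row_shift_neq:
  assumes "0 < t" "t < L"
  shows "row (i + t) \<noteq> row i"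
proof
  assume "row (i + t) = row i"
  then have "M (row i) (col (i + t)) = a" using diagonal[of "i + t"] by simp
  then have "(i + t) mod L = i mod L" by (rule a_index)
  then show False using mod_add_neq[OF assms] by blast
qed

lemma col_shift_neq:
  assumes "0 < t" "t < L"
  shows "col (j + t) \<noteq> col j"
proof
  assume "col (j + t) = col j"
  then have "M (row (j + t)) (col j) = a" using diagonal[of "j + t"] by simp
  then have "(j + t) mod L = j mod L" using a_index by metis
  then show False using mod_add_neq[OF assms] by blast
qed

lemma col_periodic: "col (j + L) = col j"
  by (simp add: col_def)

lemma off_not_a: "0 < t \<Longrightarrow> t < L \<Longrightarrow> off i t \<noteq> a"
  using a_index[of i "i + t"] mod_add_neq[of t L i] unfolding off_def by argo

lemma off_not_b:
  assumes "2 \<le> t" "t < L"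
  shows "off i t \<noteq> b"
proof
  assume "off i t = b"
  then have "(i + t) mod L = Suc i mod L" unfolding off_def by (rule b_index)
  moreover have "i + t = Suc i + (t - 1)" using assms by simp
  moreover have "(Suc i + (t - 1)) mod L \<noteq> Suc i mod L" by (rule mod_add_neq) (use assms in auto)
  ultimately show False by metis
qed

lemma off_values: "2 \<le> t \<Longrightarrow> t < L \<Longrightarrow> off i t \<in> {v. v < 4 \<and> v \<noteq> a \<and> v \<noteq> b}"
  using entry_less[of i "i + t"] off_not_a[of t i] off_not_b[of t i] by (simp add: off_def)


lemma a_value_less: "a < 4" and b_value_less: "b < 4"
  using entry_less[of 0 0] entry_less[of 0 1] diagonal[of 0] superdiagonal[of 0] by simp_all

(* Each equality excluded by two_valued_obstruction exhibits one of the three patterns.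
   Equal mirror images across the a-diagonal: rows i, i + t and columns i, i + t form
   a switch. *)
lemma mirror_around_a:
  assumes t: "0 < t" "t < L" and eq: "off i t = off (i + t) (L - t)"
  shows "small_non_lonesum m n M"
proof (rule switch_small_non_lonesum[of "row i" "row (i + t)" "col i" "col (i + t)"])
  have "col (i + t + (L - t)) = col i" using t col_periodic by simp
  then show "M (row (i + t)) (col i) = off i t" using eq by (simp add: off_def)
  show "row i \<noteq> row (i + t)" "col i \<noteq> col (i + t)"
    using row_shift_neq[OF t] col_shift_neq[OF t] by metis+
  show "a \<noteq> off i t" using off_not_a[OF t] by metis
qed (use row_less col_less diagonal entry_less a_value_less in \<open>auto simp: off_def\<close>)

lemma mirror_around_b:
  assumes t: "0 < t" "Suc t < L" and eq: "off i (Suc t) = off (i + t) (L - t + 1)"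
  shows "small_non_lonesum m n M"
proof (rule switch_small_non_lonesum[of "row i" "row (i + t)" "col (Suc i)" "col (Suc (i + t))"])
  have "col (i + t + (L - t + 1)) = col (Suc i)" using t col_periodic[of "Suc i"] by simp
  then show "M (row (i + t)) (col (Suc i)) = off i (Suc t)" using eq by (simp add: off_def)
  show "row i \<noteq> row (i + t)" using row_shift_neq[of t i] t by auto
  show "col (Suc i) \<noteq> col (Suc (i + t))" using col_shift_neq[of t "Suc i"] t by simp
  show "b \<noteq> off i (Suc t)" using off_not_b[of "Suc t" i] t by simp
qed (use row_less col_less superdiagonal entry_less b_value_less in \<open>auto simp: off_def\<close>)

lemma near_left_pattern:
  assumes eq: "off i 2 = off (Suc i) (L - 1)"
  shows "small_non_lonesum m n M"
proof (rule shift_23_small_non_lonesum[of "row i" "row (Suc i)" "col i" "col (Suc i)" "col (i + 2)"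
      m n M a b "off i 2"])
  have "col (Suc i + (L - 1)) = col i" using long col_periodic by simp
  then show "M (row (Suc i)) (col i) = off i 2" using eq by (simp add: off_def)
  show "off i 2 \<noteq> a" using off_not_a long by simp
  show "row i \<noteq> row (Suc i)" using row_shift_neq[of 1 i] long by simp
  show "col i \<noteq> col (Suc i)" using col_shift_neq[of 1 i] long by simp
  show "col i \<noteq> col (i + 2)" using col_shift_neq[of 2 i] long by simp
  show "col (Suc i) \<noteq> col (i + 2)" using col_shift_neq[of 1 "Suc i"] long by simp
  show "M (row (Suc i)) (col (i + 2)) = b" using superdiagonal[of "Suc i"] by simp
qed (use row_less col_less diagonal superdiagonal entry_less a_value_less b_value_less
     in \<open>auto simp: off_def\<close>)

lemma near_right_pattern:
  assumes eq: "off i 2 = off (i + 2) (L - 1)"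
  shows "small_non_lonesum m n M"
proof (rule shift_32_small_non_lonesum[of "row i" "row (Suc i)" "row (i + 2)" "col (Suc i)"
      "col (i + 2)" m n M b "off i 2" a])
  have "col (i + 2 + (L - 1)) = col (Suc i)" using long col_periodic[of "Suc i"] by simp
  then show "M (row (i + 2)) (col (Suc i)) = off i 2" using eq by (simp add: off_def)
  show "off i 2 \<noteq> b" using off_not_b long by simp
  show "row i \<noteq> row (Suc i)" using row_shift_neq[of 1 i] long by simp
  show "row i \<noteq> row (i + 2)" using row_shift_neq[of 2 i] long by simp
  show "row (Suc i) \<noteq> row (i + 2)" using row_shift_neq[of 1 "Suc i"] long by simp
  show "col (Suc i) \<noteq> col (i + 2)" using col_shift_neq[of 1 "Suc i"] long by simp
  show "M (row (Suc i)) (col (i + 2)) = b" using superdiagonal[of "Suc i"] by simp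
  show "M (row (i + 2)) (col (i + 2)) = a" by (rule diagonal)
qed (use row_less col_less diagonal superdiagonal entry_less a_value_less b_value_less
     in \<open>auto simp: off_def\<close>)

theorem small_non_lonesum: "small_non_lonesum m n M"
proof (rule ccontr)
  assume none: "\<not> small_non_lonesum m n M"
  let ?S = "{v. v < 4 \<and> v \<noteq> a \<and> v \<noteq> b}"
  have "?S = {0..<4} - {a, b}" by auto
  then have "card ?S = 2"
    using a_value_less b_value_less distinct_values by (simp add: card_Diff_subset)
  show False
  proof (rule two_valued_obstruction[of L ?S off])
    show "finite ?S" "card ?S \<le> 2" using \<open>card ?S = 2\<close> by auto
    show "off i t \<noteq> off (i + t) (L - t)" if "2 \<le> t" "t + 2 \<le> L" for i t
      using mirror_around_a[of t i] that none by auto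
    show "off i (Suc t) \<noteq> off (i + t) (L - t + 1)" if "2 \<le> t" "Suc t < L" for i t
      using mirror_around_b[of t i] that none by auto
    show "off i 2 \<noteq> off (Suc i) (L - 1)" for i using near_left_pattern none by blast
    show "off i 2 \<noteq> off (i + 2) (L - 1)" for i using near_right_pattern none by blast
  qed (use long off_values in auto)
qed

end

lemma staircase_rotate:
  assumes "staircase m n M a b L R C"
  shows "staircase m n M a b L (\<lambda>t. R ((t + s) mod L)) (\<lambda>t. C ((t + s) mod L))"
proof -
  have "(Suc i mod L + s) mod L = Suc ((i + s) mod L) mod L" for i
    by (metis add_Suc mod_Suc_eq mod_add_left_eq)
  moreover have "0 < L" using assms by (simp add: staircase_def)
  ultimately show ?thesis using assms by (simp add: staircase_def)
qed

(* A chord can be used as a shortcut, producing a strictly shorter staircase: an a at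
   (R 0, C j) closes the staircase after j steps, a b at (R i, C 0) after i + 1 steps. *)
lemma staircase_shortcut_a:
  assumes st: "staircase m n M a b L R C" and j: "0 < j" "j < L"
    and chord: "M (R 0) (C j) = a" and ab: "a \<noteq> b"
  shows "staircase m n M a b j R (\<lambda>t. if t = 0 then C j else C t)"
proof -
  have L: "2 \<le> L"
    and step: "\<And>i. i < L \<Longrightarrow> R i < m \<and> C i < n \<and> M (R i) (C i) = a \<and> M (R i) (C (Suc i mod L)) = b"
    using st by (auto simp: staircase_def)
  have "j \<noteq> 1" using step[of 0] chord ab L by auto
  then have "2 \<le> j" using j by simp
  moreover have "M (R t) (if Suc t mod j = 0 then C j else C (Suc t mod j)) = b" if "t < j" for t
    using step[of t] that j by (cases "Suc t = j") simp_all
  ultimately show ?thesis using step j chord by (simp add: staircase_def)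
qed

lemma staircase_shortcut_b:
  assumes st: "staircase m n M a b L R C" and i: "0 < i" "Suc i < L"
    and chord: "M (R i) (C 0) = b"
  shows "staircase m n M a b (Suc i) R C"
proof -
  have step: "\<And>t. t < L \<Longrightarrow> R t < m \<and> C t < n \<and> M (R t) (C t) = a \<and> M (R t) (C (Suc t mod L)) = b"
    using st by (auto simp: staircase_def)
  have "M (R t) (C (Suc t mod Suc i)) = b" if "t < Suc i" for t
    using chord step[of t] that i by (cases "t = i") simp_all
  then show ?thesis using step i by (simp add: staircase_def)
qed

(* The same for arbitrary chords, after rotating the chord to the start. *)
lemma staircase_chord_a:
  assumes st: "staircase m n M a b L R C" and ab: "a \<noteq> b"
    and ij: "i < L" "j < L" "i \<noteq> j" and chord: "M (R i) (C j) = a"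
  obtains L' R' C' where "L' < L" "staircase m n M a b L' R' C'"
proof -
  define j' where "j' = (j + L - i) mod L"
  have "j' < L" using ij by (simp add: j'_def)
  have rotated_j: "(j' + i) mod L = j"
  proof -
    have "(j' + i) mod L = (j + L - i + i) mod L" unfolding j'_def by (rule mod_add_left_eq)
    also have "\<dots> = j" using ij by simp
    finally show ?thesis .
  qed
  then have "0 < j'" using ij by (cases "j' = 0") simp_all
  moreover have "M ((\<lambda>t. R ((t + i) mod L)) 0) ((\<lambda>t. C ((t + i) mod L)) j') = a"
    using chord ij rotated_j by simp
  ultimately show ?thesis
    using that[OF \<open>j' < L\<close> staircase_shortcut_a[OF staircase_rotate[OF st] _ \<open>j' < L\<close> _ ab]]
    by blast
qed

lemma staircase_chord_b:
  assumes st: "staircase m n M a b L R C" and ab: "a \<noteq> b"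
    and ij: "i < L" "j < L" "j \<noteq> Suc i mod L" and chord: "M (R i) (C j) = b"
  obtains L' R' C' where "L' < L" "staircase m n M a b L' R' C'"
proof -
  have "i \<noteq> j" using st ij chord ab by (auto simp: staircase_def)
  define i' where "i' = (i + L - j) mod L"
  have rotated_i: "(i' + j) mod L = i"
  proof -
    have "(i' + j) mod L = (i + L - j + j) mod L" unfolding i'_def by (rule mod_add_left_eq)
    also have "\<dots> = i" using ij by simp
    finally show ?thesis .
  qed
  then have "0 < i'" using \<open>i \<noteq> j\<close> ij by (cases "i' = 0") simp_all
  have "Suc i' < L"
  proof (rule ccontr)
    assume "\<not> Suc i' < L"
    moreover have "i' < L" using ij by (simp add: i'_def)
    ultimately have "Suc i' = L" by simp
    then have "Suc i mod L = (j + L) mod L" using rotated_i by (metis add_Suc mod_Suc_eq add.commute)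
    then show False using ij by simp
  qed
  moreover have "M ((\<lambda>t. R ((t + j) mod L)) i') ((\<lambda>t. C ((t + j) mod L)) 0) = b"
    using chord ij rotated_i by simp
  ultimately show ?thesis
    using that[OF _ staircase_shortcut_b[OF staircase_rotate[OF st] \<open>0 < i'\<close>]] by fastforce
qed

lemma staircase_two_small_non_lonesum:
  assumes q: "q_ary_matrix 4 m n M" and ab: "a \<noteq> b" and st: "staircase m n M a b 2 R C"
  shows "small_non_lonesum m n M"
proof -
  have s0: "R 0 < m" "C 0 < n" "M (R 0) (C 0) = a" "M (R 0) (C 1) = b"
    and s1: "R 1 < m" "C 1 < n" "M (R 1) (C 1) = a" "M (R 1) (C 0) = b"
    using st by (auto simp: staircase_def dest: spec[of _ 0] spec[of _ 1])
  show ?thesis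
  proof (rule switch_small_non_lonesum[of "R 0" "R 1" "C 0" "C 1"])
    show "R 0 \<noteq> R 1" "C 0 \<noteq> C 1" using s0 s1 ab by metis+
    show "a < 4" "b < 4" using q s0 s1 by (auto simp: q_ary_matrix_def)
  qed (use s0 s1 ab in auto)
qed

theorem staircase_small_non_lonesum:
  assumes q: "q_ary_matrix 4 m n M" and ab: "a \<noteq> b" and st: "staircase m n M a b L R C"
  shows "small_non_lonesum m n M"
  using st
proof (induction L arbitrary: R C rule: less_induct)
  case (less L)
  show ?case
  proof (cases "\<exists>i<L. \<exists>j<L. (i \<noteq> j \<and> M (R i) (C j) = a) \<or> (j \<noteq> Suc i mod L \<and> M (R i) (C j) = b)")
    case True
    then obtain L' R' C' where "L' < L" "staircase m n M a b L' R' C'"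
      using staircase_chord_a[OF less.prems ab] staircase_chord_b[OF less.prems ab] by metis
    then show ?thesis by (rule less.IH)
  next
    case False
    then have a_on_diagonal: "\<And>i j. i < L \<Longrightarrow> j < L \<Longrightarrow> M (R i) (C j) = a \<Longrightarrow> i = j"
      and b_on_superdiagonal: "\<And>i j. i < L \<Longrightarrow> j < L \<Longrightarrow> M (R i) (C j) = b \<Longrightarrow> j = Suc i mod L"
      by blast+
    consider "L = 2" | "3 \<le> L" using less.prems by (force simp: staircase_def)
    then show ?thesis
    proof cases
      case 1
      then show ?thesis using staircase_two_small_non_lonesum q ab less.prems by simp
    next
      case 2
      interpret chordless_staircase m n M a b L R C
        using q ab less.prems 2 a_on_diagonal b_on_superdiagonal by unfold_locales
      show ?thesis by (rule small_non_lonesum)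
    qed
  qed
qed

(* Along a path, row steps and column steps alternate: two row steps in a row would
   violate condition (2), and every step that is not a row step is a column step. *)
lemma path_steps_alternate:
  assumes P: "path_conds M ps" and l: "l + 2 < length ps"
  shows "fst (ps!(l+1)) = fst (ps!(l+2)) \<longleftrightarrow> fst (ps!l) \<noteq> fst (ps!(l+1))"
proof -
  have step: "fst (ps!k) = fst (ps!(k+1)) \<or> snd (ps!k) = snd (ps!(k+1))" if "k + 1 < length ps" for k
    using P that by (simp add: path_conds_def)
  have rows: "2 \<le> card {fst (ps!l), fst (ps!(l+1)), fst (ps!(l+2))}"
    and cols: "2 \<le> card {snd (ps!l), snd (ps!(l+1)), snd (ps!(l+2))}"
    using P l by (simp_all add: path_conds_def)
  show ?thesis
  proof
    assume "fst (ps!(l+1)) = fst (ps!(l+2))"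
    then show "fst (ps!l) \<noteq> fst (ps!(l+1))" using rows by auto
  next
    assume "fst (ps!l) \<noteq> fst (ps!(l+1))"
    then have "snd (ps!l) = snd (ps!(l+1))" using step[of l] l by simp
    then have "snd (ps!(l+1)) \<noteq> snd (ps!(l+2))" using cols by auto
    then show "fst (ps!(l+1)) = fst (ps!(l+2))" using step[of "l+1"] l by simp
  qed
qed

lemma path_row_steps_parity:
  assumes P: "path_conds M ps" and l: "l + 1 < length ps"
  shows "fst (ps!l) = fst (ps!(l+1)) \<longleftrightarrow> (even l \<longleftrightarrow> fst (ps!0) = fst (ps!1))"
  using l
proof (induction l)
  case (Suc l)
  then show ?case using path_steps_alternate[OF P, of l] by auto
qed simp

(* A cycle has even length, as the values alternate and the cycle closes up. *)
lemma cycle_length_even: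
  assumes "is_cycle m n M ps"
  shows "even (length ps)"
proof (rule ccontr)
  let ?qs = "ps @ [ps!0, ps!1]"
  assume odd: "odd (length ps)"
  obtain a b where "a \<noteq> b"
    and colour: "\<And>l. l < length ?qs \<Longrightarrow> M (fst (?qs!l)) (snd (?qs!l)) = (if even l then a else b)"
    using assms unfolding is_cycle_def path_conds_def by blast
  have "?qs ! length ps = ?qs ! 0" using assms by (simp add: is_cycle_def nth_append)
  then show False using colour[of 0] colour[of "length ps"] odd \<open>a \<noteq> b\<close> by simp
qed

(* Reading a cycle from its first row step gives a staircase. *)
lemma cycle_staircase:
  assumes cyc: "is_cycle m n M ps" and len: "4 \<le> length ps"
  obtains a b L R C where "a \<noteq> b" "staircase m n M a b L R C"
proof -
  define k where "k = length ps"
  define qs where "qs = ps @ [ps!0, ps!1]"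
  have P: "path_conds M qs" using cyc by (simp add: is_cycle_def qs_def)
  have len_qs: "length qs = k + 2" by (simp add: qs_def k_def)
  have wrap: "qs!(k + s) = qs!s" if "s \<le> 1" for s
    using that len by (cases s) (auto simp: qs_def k_def nth_append)
  have inside: "fst (qs!l) < m \<and> snd (qs!l) < n" if "l < k + 2" for l
  proof -
    have "ps!0 \<in> set ps" "ps!1 \<in> set ps" using len by (auto intro!: nth_mem)
    then have "set qs = set ps" by (auto simp: qs_def)
    then have "qs!l \<in> set ps" using that len_qs by (metis nth_mem)
    then show ?thesis using cyc by (auto simp: is_cycle_def is_path_def)
  qed
  obtain a b where "a \<noteq> b"
    and colour: "\<And>l. l < k + 2 \<Longrightarrow> M (fst (qs!l)) (snd (qs!l)) = (if even l then a else b)"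
    using P len_qs unfolding path_conds_def by auto
  define s :: nat where "s = (if fst (qs!0) = fst (qs!1) then 0 else 1)"
  have row_step: "fst (qs!l) = fst (qs!(l+1)) \<longleftrightarrow> even (l + s)" if "l + 1 < k + 2" for l
    using path_row_steps_parity[OF P, of l] that len_qs by (auto simp: s_def)
  have col_step: "snd (qs!l) = snd (qs!(l+1))" if "odd (l + s)" "l + 1 < k + 2" for l
    using P that row_step[OF that(2)] len_qs by (auto simp: path_conds_def)
  define L where "L = k div 2"
  have k_eq: "k = 2 * L" using cycle_length_even[OF cyc] by (simp add: L_def k_def)
  define R where "R i = fst (qs!(2 * i + s))" for i
  define C where "C i = snd (qs!(2 * i + s))" for i
  have s_le: "s \<le> 1" by (simp add: s_def)
  have "staircase m n M (if even s then a else b) (if even (Suc s) then a else b) L R C"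
    unfolding staircase_def
  proof (intro conjI allI impI)
    show "2 \<le> L" using len k_eq k_def by simp
    fix i assume i: "i < L"
    show "R i < m" "C i < n" using inside[of "2 * i + s"] i s_le k_eq by (auto simp: R_def C_def)
    show "M (R i) (C i) = (if even s then a else b)"
      using colour[of "2 * i + s"] i s_le k_eq by (simp add: R_def C_def)
    have same_row: "fst (qs!(2 * i + s)) = fst (qs!(2 * i + s + 1))"
      using row_step[of "2 * i + s"] i s_le k_eq by simp
    have same_col: "snd (qs!(2 * i + s + 1)) = snd (qs!(2 * (Suc i mod L) + s))"
    proof (cases "Suc i < L")
      case True
      then show ?thesis using col_step[of "2 * i + s + 1"] s_le k_eq by simp
    next
      case False
      then have "Suc i = L" using i by simp
      then have "2 * i + s + 1 + 1 = k + s" "Suc i mod L = 0" using k_eq by auto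
      then have "qs!(2 * i + s + 1 + 1) = qs!s" using wrap[OF s_le] by metis
      then show ?thesis
        using col_step[of "2 * i + s + 1"] i s_le k_eq \<open>Suc i mod L = 0\<close> by simp
    qed
    show "M (R i) (C (Suc i mod L)) = (if even (Suc s) then a else b)"
      using colour[of "2 * i + s + 1"] i s_le k_eq same_row same_col by (simp add: R_def C_def)
  qed
  moreover have "(if even s then a else b) \<noteq> (if even (Suc s) then a else b)"
    using \<open>a \<noteq> b\<close> by auto
  ultimately show ?thesis using that by blast
qed

(* The main theorem; the argument only needs cycles of length at least 4. *)
theorem theorem3p10:
  fixes m n :: nat and M :: "nat \<Rightarrow> nat \<Rightarrow> nat" and ps :: "(nat \<times> nat) list"
  assumes "q_ary_matrix 4 m n M"
    and "is_cycle m n M ps"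
    and "length ps \<ge> 6"
  shows "\<exists>rs cs. valid_sub_indices m n rs cs \<and>
           (length rs, length cs) \<in> {(2,2), (2,3), (3,2)} \<and>
           \<not> weak_lonesum 4 (length rs) (length cs) (submatrix M rs cs)"
proof -
  have "4 \<le> length ps" using assms(3) by simp
  then obtain a b L R C where "a \<noteq> b" "staircase m n M a b L R C"
    by (rule cycle_staircase[OF assms(2)])
  then have "small_non_lonesum m n M"
    using staircase_small_non_lonesum[OF assms(1)] by blast
  then show ?thesis unfolding small_non_lonesum_def .
qed

end
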